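(* Let $W\in C^2_{\mathrm{loc}}(\mathbb{R}^N)$ and let $a^\pm$ be local minima of $W$ with $W(a^-)<0=W(a^+)$. Assume $(U,c)\in[C^2(\mathbb{R})]^N\times(0,\infty)$ solves $U_{xx}-\nabla W(U)=-cU_x$ on $\mathbb{R}$ with $U(\pm\infty)=a^\pm$, and that $U_x(\pm\infty)=0$ up to sequences. Then \[ W^-(a^-)=c\int_{\mathbb{R}}|U_x|^2dx \qquad\text{and}\qquad c\,(a^+-a^-)=\int_{\mathbb{R}}\nabla W(U)\,dx . \]
   Context: $W^-:=\max\{-W,0\}$. *)

theory Defs
  imports "HOL-Analysis.Analysis"
begin

definition negpart :: "real \<Rightarrow> real" where
  "negpart t = max (- t) 0"

definition is_local_min :: "('a::metric_space \<Rightarrow> real) \<Rightarrow> 'a \<Rightarrow> bool" where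
  "is_local_min f a \<longleftrightarrow> (\<exists>e>0. \<forall>y. dist y a < e \<longrightarrow> f a \<le> f y)"

end

theory Submission
  imports Defs
begin

text \<open>
  Taking the inner product of the equation with \<open>U'\<close> shows that the energy
  \<open>E = |U'|\<^sup>2/2 - W(U)\<close> satisfies \<open>E' = -c |U'|\<^sup>2\<close>, so \<open>E\<close> is nonincreasing.
  Along the sequences on which \<open>U'\<close> vanishes, \<open>E\<close> tends to \<open>-W(a\<^sup>\<plusminus>)\<close>; by
  monotonicity these are its limits at \<open>\<plusminus>\<infinity>\<close>, which in turn forces \<open>U' \<rightarrow> 0\<close> at
  \<open>\<plusminus>\<infinity>\<close>. Integrating \<open>E'\<close> over \<open>\<real>\<close> gives the first identity, and integrating
  the equation itself, whose left side \<open>\<nabla>W(U)\<close> has the antiderivative \<open>U' + c U\<close>,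
  gives the second.
\<close>

lemma has_integral_UNIV_of_tendsto:
  fixes F f :: "real \<Rightarrow> 'a::banach"
  assumes F: "\<And>x. (F has_vector_derivative f x) (at x)"
    and top: "(F \<longlongrightarrow> L2) at_top" and bot: "(F \<longlongrightarrow> L1) at_bot"
  shows "(f has_integral (L2 - L1)) UNIV"
proof (simp only: has_integral_alt' UNIV_I if_True, intro conjI allI impI)
  have ftc: "(f has_integral (F y - F x)) (cbox x y)" if "x \<le> y" for x y
    using that by (auto intro: fundamental_theorem_of_calculus has_vector_derivative_at_within F)
  show "f integrable_on cbox x y" for x y
    using ftc[of x y] by (cases "x \<le> y") auto
  fix e :: real assume "e > 0"
  obtain N2 where N2: "\<And>x. x \<ge> N2 \<Longrightarrow> dist (F x) L2 < e/2"
    using tendsto_iff[THEN iffD1, OF top, rule_format, of "e/2"] \<open>e > 0\<close>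
    by (auto simp: eventually_at_top_linorder)
  obtain N1 where N1: "\<And>x. x \<le> N1 \<Longrightarrow> dist (F x) L1 < e/2"
    using tendsto_iff[THEN iffD1, OF bot, rule_format, of "e/2"] \<open>e > 0\<close>
    by (auto simp: eventually_at_bot_linorder)
  show "\<exists>B>0. \<forall>x y. ball 0 B \<subseteq> cbox x y \<longrightarrow> norm (integral (cbox x y) f - (L2 - L1)) < e"
  proof (intro exI[of _ "\<bar>N1\<bar> + \<bar>N2\<bar> + 1"] conjI allI impI)
    fix x y assume sub: "ball 0 (\<bar>N1\<bar> + \<bar>N2\<bar> + 1) \<subseteq> cbox x (y::real)"
    have "- \<bar>N1\<bar> \<in> ball 0 (\<bar>N1\<bar> + \<bar>N2\<bar> + 1)" "\<bar>N2\<bar> \<in> ball 0 (\<bar>N1\<bar> + \<bar>N2\<bar> + 1)"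
      by auto
    then have "- \<bar>N1\<bar> \<in> cbox x y" "\<bar>N2\<bar> \<in> cbox x y"
      using sub by blast+
    then have xy: "x \<le> N1" "N2 \<le> y" "x \<le> y" by auto
    have "norm (integral (cbox x y) f - (L2 - L1)) = norm ((F y - L2) - (F x - L1))"
      unfolding integral_unique[OF ftc[OF xy(3)]] by (simp add: algebra_simps)
    also have "\<dots> \<le> dist (F y) L2 + dist (F x) L1"
      by (simp add: dist_norm norm_triangle_ineq4)
    also have "\<dots> < e"
      using N1[OF xy(1)] N2[OF xy(2)] by simp
    finally show "norm (integral (cbox x y) f - (L2 - L1)) < e" .
  qed simp
qed

lemma mono_tendsto_at_top_of_seq:
  fixes f :: "'a::linorder \<Rightarrow> 'b::linorder_topology"
  assumes mono: "mono f" and s: "filterlim s at_top sequentially"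
    and lim: "(\<lambda>k. f (s k)) \<longlonglongrightarrow> L"
  shows "(f \<longlongrightarrow> L) at_top"
proof (rule order_tendstoI)
  fix a assume "a < L"
  then obtain N where "a < f (s N)"
    using order_tendstoD(1)[OF lim] eventually_sequentially by (metis order_refl)
  then show "\<forall>\<^sub>F x in at_top. a < f x"
    unfolding eventually_at_top_linorder using mono by (auto intro: less_le_trans dest: monoD)
next
  fix a assume "L < a"
  have "f x \<le> L" for x
  proof (rule tendsto_lowerbound[OF lim])
    show "\<forall>\<^sub>F k in sequentially. f x \<le> f (s k)"
      using s mono unfolding filterlim_at_top by (metis (mono_tags) eventually_mono monoD)
  qed simp
  with \<open>L < a\<close> show "\<forall>\<^sub>F x in at_top. f x < a"
    by (auto intro: always_eventually le_less_trans)
qed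

lemma antimono_tendsto_at_top_of_seq:
  fixes f :: "'a::linorder \<Rightarrow> real"
  assumes "antimono f" "filterlim s at_top sequentially" "(\<lambda>k. f (s k)) \<longlonglongrightarrow> L"
  shows "(f \<longlongrightarrow> L) at_top"
proof -
  have "((\<lambda>x. - f x) \<longlongrightarrow> - L) at_top"
    using assms by (intro mono_tendsto_at_top_of_seq[of _ s])
      (auto intro: tendsto_minus simp: monotone_on_def antimono_def)
  then show ?thesis by (simp add: tendsto_minus_cancel_left)
qed

lemma antimono_tendsto_at_bot_of_seq:
  fixes f :: "real \<Rightarrow> real"
  assumes "antimono f" "filterlim s at_bot sequentially" "(\<lambda>k. f (s k)) \<longlonglongrightarrow> L"
  shows "(f \<longlongrightarrow> L) at_bot"
  unfolding filterlim_at_bot_mirror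
proof (rule mono_tendsto_at_top_of_seq[of _ "\<lambda>k. - s k"])
  show "mono (\<lambda>x. f (- x))"
    using \<open>antimono f\<close> by (simp add: mono_def antimono_def)
  show "filterlim (\<lambda>k. - s k) at_top sequentially"
    using assms(2) by (simp add: filterlim_uminus_at_bot)
qed (use assms(3) in simp)

definition energy ::
    "('a::real_normed_vector \<Rightarrow> real) \<Rightarrow> (real \<Rightarrow> 'a) \<Rightarrow> (real \<Rightarrow> 'a) \<Rightarrow> real \<Rightarrow> real"
  where "energy W U U' x = (norm (U' x))\<^sup>2 / 2 - W (U x)"

lemma energy_has_real_derivative:
  fixes W :: "'a::real_inner \<Rightarrow> real"
  assumes W: "GDERIV W (U x) :> gW (U x)"
    and U: "(U has_vector_derivative U' x) (at x)"
    and U': "(U' has_vector_derivative U'' x) (at x)"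
  shows "(energy W U U' has_real_derivative U' x \<bullet> (U'' x - gW (U x))) (at x)"
proof -
  have "((\<lambda>x. W (U x)) has_real_derivative gW (U x) \<bullet> U' x) (at x)"
    unfolding has_field_derivative_def
    by (rule has_derivative_eq_rhs[OF has_derivative_compose[OF U[unfolded has_vector_derivative_def]
          W[unfolded gderiv_def]]]) (simp add: fun_eq_iff inner_commute)
  moreover have "((\<lambda>x. U' x \<bullet> U' x) has_real_derivative 2 * (U' x \<bullet> U'' x)) (at x)"
    unfolding has_field_derivative_def
    by (rule has_derivative_eq_rhs[OF has_derivative_inner[OF U'[unfolded has_vector_derivative_def]
          U'[unfolded has_vector_derivative_def]]]) (simp add: fun_eq_iff inner_commute algebra_simps)
  ultimately have "(energy W U U' has_real_derivative 2 * (U' x \<bullet> U'' x) / 2 - gW (U x) \<bullet> U' x) (at x)"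
    unfolding energy_def[abs_def] power2_norm_eq_inner by (intro DERIV_diff DERIV_cdivide)
  then show ?thesis
    by (simp add: inner_diff_right inner_commute)
qed

lemma tendsto_energy:
  fixes U U' :: "real \<Rightarrow> 'a::real_normed_vector"
  assumes "((\<lambda>x. U (g x)) \<longlongrightarrow> a) F" "((\<lambda>x. U' (g x)) \<longlongrightarrow> 0) F" "isCont W a"
  shows "((\<lambda>x. energy W U U' (g x)) \<longlongrightarrow> - W a) F"
proof -
  have "((\<lambda>x. (norm (U' (g x)))\<^sup>2 / 2 - W (U (g x))) \<longlongrightarrow> (norm (0::'a))\<^sup>2 / 2 - W a) F"
    using assms by (intro tendsto_intros isCont_tendsto_compose[where g = W]) simp_all
  then show ?thesis by (simp add: energy_def)
qed

lemma tendsto_velocity_zero: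
  fixes U U' :: "real \<Rightarrow> 'a::real_normed_vector"
  assumes E: "(energy W U U' \<longlongrightarrow> - W a) F" and U: "(U \<longlongrightarrow> a) F" and W: "isCont W a"
  shows "(U' \<longlongrightarrow> 0) F"
proof -
  have "((\<lambda>x. 2 * (energy W U U' x + W (U x))) \<longlongrightarrow> 2 * (- W a + W a)) F"
    using E isCont_tendsto_compose[OF W U] by (intro tendsto_intros)
  then have "((\<lambda>x. sqrt ((norm (U' x))\<^sup>2)) \<longlongrightarrow> sqrt 0) F"
    by (intro tendsto_real_sqrt) (simp add: energy_def)
  then show ?thesis by (simp add: tendsto_norm_zero_iff)
qed

locale travelling_wave =
  fixes W :: "'a::{real_inner, banach} \<Rightarrow> real" and gW :: "'a \<Rightarrow> 'a"
    and U U' U'' :: "real \<Rightarrow> 'a" and c :: real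
  assumes grad: "\<And>u. GDERIV W u :> gW u"
    and dU: "\<And>x. (U has_vector_derivative U' x) (at x)"
    and dU': "\<And>x. (U' has_vector_derivative U'' x) (at x)"
    and ode: "\<And>x. U'' x - gW (U x) = - (c *\<^sub>R U' x)"
    and c_pos: "c > 0"
begin

lemma isCont_W: "isCont W u"
  using grad[of u] unfolding gderiv_def by (rule has_derivative_continuous)

lemma energy_dissipation: "(energy W U U' has_real_derivative - c * (norm (U' x))\<^sup>2) (at x)"
  using energy_has_real_derivative[where U = U and U' = U' and U'' = U'' and gW = gW, OF grad dU dU']
  by (simp add: ode power2_norm_eq_inner)

lemma antimono_energy: "antimono (energy W U U')"
proof (rule antimonoI)
  fix x y :: real assume "x \<le> y"
  show "energy W U U' y \<le> energy W U U' x"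
  proof (rule DERIV_nonpos_imp_nonincreasing[OF \<open>x \<le> y\<close>])
    show "\<exists>d. (energy W U U' has_real_derivative d) (at z) \<and> d \<le> 0" for z
      using energy_dissipation[of z] c_pos by (intro exI[of _ "- c * (norm (U' z))\<^sup>2"]) simp
  qed
qed

lemma energy_tendsto_at_top:
  assumes U: "(U \<longlongrightarrow> a) at_top"
    and s: "filterlim s at_top sequentially" "(\<lambda>k. U' (s k)) \<longlonglongrightarrow> 0"
  shows "(energy W U U' \<longlongrightarrow> - W a) at_top"
  by (rule antimono_tendsto_at_top_of_seq[OF antimono_energy s(1)
        tendsto_energy[OF filterlim_compose[OF U s(1)] s(2) isCont_W]])

lemma energy_tendsto_at_bot:
  assumes U: "(U \<longlongrightarrow> a) at_bot"
    and s: "filterlim s at_bot sequentially" "(\<lambda>k. U' (s k)) \<longlonglongrightarrow> 0"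
  shows "(energy W U U' \<longlongrightarrow> - W a) at_bot"
  by (rule antimono_tendsto_at_bot_of_seq[OF antimono_energy s(1)
        tendsto_energy[OF filterlim_compose[OF U s(1)] s(2) isCont_W]])

context
  fixes am ap :: 'a and s t :: "nat \<Rightarrow> real"
  assumes lim_p: "(U \<longlongrightarrow> ap) at_top" and lim_m: "(U \<longlongrightarrow> am) at_bot"
    and s: "filterlim s at_top sequentially" "(\<lambda>k. U' (s k)) \<longlonglongrightarrow> 0"
    and t: "filterlim t at_bot sequentially" "(\<lambda>k. U' (t k)) \<longlonglongrightarrow> 0"
begin

lemma norm_velocity_squared_has_integral:
  "((\<lambda>x. (norm (U' x))\<^sup>2) has_integral (W ap / c - W am / c)) UNIV"
proof (rule has_integral_UNIV_of_tendsto)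
  show "((\<lambda>x. - energy W U U' x / c) has_vector_derivative (norm (U' x))\<^sup>2) (at x)" for x
    using DERIV_cdivide[OF DERIV_minus[OF energy_dissipation[of x]], of c] c_pos
    by (simp add: has_real_derivative_iff_has_vector_derivative)
  show "((\<lambda>x. - energy W U U' x / c) \<longlongrightarrow> W ap / c) at_top"
    using tendsto_divide[OF tendsto_minus[OF energy_tendsto_at_top[OF lim_p s]] tendsto_const, of c] c_pos
    by simp
  show "((\<lambda>x. - energy W U U' x / c) \<longlongrightarrow> W am / c) at_bot"
    using tendsto_divide[OF tendsto_minus[OF energy_tendsto_at_bot[OF lim_m t]] tendsto_const, of c] c_pos
    by simp
qed

lemma gradient_has_integral: "((\<lambda>x. gW (U x)) has_integral (c *\<^sub>R (ap - am))) UNIV"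
proof -
  have "((\<lambda>x. gW (U x)) has_integral ((0 + c *\<^sub>R ap) - (0 + c *\<^sub>R am))) UNIV"
  proof (rule has_integral_UNIV_of_tendsto)
    show "((\<lambda>x. U' x + c *\<^sub>R U x) has_vector_derivative gW (U x)) (at x)" for x
      using has_vector_derivative_add[OF dU'[of x]
          has_vector_derivative_scaleR[OF DERIV_const[of c] dU[of x]]] ode[of x]
      by (simp add: algebra_simps)
    show "((\<lambda>x. U' x + c *\<^sub>R U x) \<longlongrightarrow> 0 + c *\<^sub>R ap) at_top"
      using tendsto_velocity_zero[OF energy_tendsto_at_top[OF lim_p s] lim_p isCont_W]
      by (intro tendsto_add tendsto_scaleR tendsto_const lim_p)
    show "((\<lambda>x. U' x + c *\<^sub>R U x) \<longlongrightarrow> 0 + c *\<^sub>R am) at_bot"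
      using tendsto_velocity_zero[OF energy_tendsto_at_bot[OF lim_m t] lim_m isCont_W]
      by (intro tendsto_add tendsto_scaleR tendsto_const lim_m)
  qed
  then show ?thesis by (simp add: scaleR_diff_right)
qed

end

end

theorem mainTheorem7:
  fixes W :: "real ^ 'n \<Rightarrow> real"
    and gW :: "real ^ 'n \<Rightarrow> real ^ 'n"
    and D2W :: "real ^ 'n \<Rightarrow> ((real ^ 'n) \<Rightarrow>\<^sub>L (real ^ 'n))"
    and U U' U'' :: "real \<Rightarrow> real ^ 'n"
    and am ap :: "real ^ 'n"
    and c :: real
  assumes grad: "\<And>u. GDERIV W u :> gW u"
    and hess: "\<And>u. (gW has_derivative blinfun_apply (D2W u)) (at u)"
    and hess_cont: "continuous_on UNIV D2W"
    and min_m: "is_local_min W am"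
    and min_p: "is_local_min W ap"
    and Wm: "W am < 0" and Wp: "W ap = 0"
    and c_pos: "c > 0"
    and dU: "\<And>x. (U has_vector_derivative U' x) (at x)"
    and dU': "\<And>x. (U' has_vector_derivative U'' x) (at x)"
    and U''_cont: "continuous_on UNIV U''"
    and ode: "\<And>x. U'' x - gW (U x) = - (c *\<^sub>R U' x)"
    and lim_p: "(U \<longlongrightarrow> ap) at_top"
    and lim_m: "(U \<longlongrightarrow> am) at_bot"
    and seq_p: "\<exists>s :: nat \<Rightarrow> real. filterlim s at_top sequentially \<and> (\<lambda>k. U' (s k)) \<longlonglongrightarrow> 0"
    and seq_m: "\<exists>s :: nat \<Rightarrow> real. filterlim s at_bot sequentially \<and> (\<lambda>k. U' (s k)) \<longlonglongrightarrow> 0"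
  shows "(\<lambda>x. (norm (U' x))\<^sup>2) integrable_on UNIV
       \<and> negpart (W am) = c * integral UNIV (\<lambda>x. (norm (U' x))\<^sup>2)
       \<and> ((\<lambda>x. gW (U x)) has_integral (c *\<^sub>R (ap - am))) UNIV"
proof -
  interpret travelling_wave W gW U U' U'' c
    using grad dU dU' ode c_pos by unfold_locales
  obtain s where s: "filterlim s at_top sequentially" "(\<lambda>k. U' (s k)) \<longlonglongrightarrow> 0"
    using seq_p by blast
  obtain t where t: "filterlim t at_bot sequentially" "(\<lambda>k. U' (t k)) \<longlonglongrightarrow> 0"
    using seq_m by blast
  note velocity = norm_velocity_squared_has_integral[OF lim_p lim_m s t]
  have "negpart (W am) = c * (W ap / c - W am / c)"
    using Wm Wp c_pos by (simp add: negpart_def)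
  then show ?thesis
    using velocity gradient_has_integral[OF lim_p lim_m s t] by (auto simp: integral_unique)
qed

end
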